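(* Let $(\frac pq,\frac rs)$ be a Farey pair of order $n$ with $2\le q<s$. Put $d=\lfloor n/q\rfloor$, $\delta=\gcd(d,s)$, and define $s_1,d_1,r_1$ and $j_0\in\{0,\dots,\delta-1\}$ by $s=s_1\delta$, $d=d_1\delta$, $r=r_1\delta+j_0$; let $\hat r\in\{0,\dots,s_1-1\}$ and $l_0\in\{0,\dots,d_1-1\}$ be the nonnegative integers with $r_1=d_1\hat r-l_0s_1$. For $j\in\{0,\dots,\delta-1\}$ let $g_{1,j}(t)=t^{qd_1}-t^{qd_1-s_1}e^{2\pi ij/\delta}$ and $\hat g_{1,j}(t)=t^{qd_1}-t^{qd_1-s_1}e^{2\pi ij/(\delta d_1)}$. Then $e^{2\pi i r/s}$ is a root of $g_{1,j}$ if and only if $j=j_0$, and the root $\lambda$ of $\hat g_{1,j_0}$ satisfying $\lambda^{d_1}=e^{2\pi ir/s}$ is $\lambda=e^{\frac{2\pi i}{d_1}(\frac rs+l_0)}$.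
   Context: $\mathcal{F}_n=\{p/q:0\le p<q\le n,\ \gcd(p,q)=1\}$; a Farey pair of order $n$ is a pair $(\frac pq,\frac rs)$ of elements of $\mathcal F_n$ with $\frac pq<\frac rs$ and no element of $\mathcal F_n$ strictly between them. $g_{1,j},\hat g_{1,j}$ are the functions $g_{\alpha,j}(t)=(t^q-\beta)^{d_1}-\alpha^{d_1}t^{qd_1-s_1}e^{2\pi ij/\delta}$ and $\hat g_{\alpha,j}(t)=t^{qd_1}-\beta-\alpha t^{qd_1-s_1}e^{2\pi ij/(\delta d_1)}$ at $\alpha=1$, $\beta=0$, regarded as rational functions of $t$. *)

theory Defs
  imports "HOL-Analysis.Analysis"
begin

definition farey :: "nat \<Rightarrow> rat set" where
  "farey n = {of_nat p / of_nat q | p q. p < q \<and> q \<le> n \<and> coprime p q}"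

definition farey_pair :: "nat \<Rightarrow> nat \<Rightarrow> nat \<Rightarrow> nat \<Rightarrow> nat \<Rightarrow> bool" where
  "farey_pair n p q r s \<longleftrightarrow>
     p < q \<and> q \<le> n \<and> coprime p q \<and> r < s \<and> s \<le> n \<and> coprime r s \<and>
     (of_nat p / of_nat q :: rat) < of_nat r / of_nat s \<and>
     \<not> (\<exists>x\<in>farey n. of_nat p / of_nat q < x \<and> x < of_nat r / of_nat s)"

text \<open>g_{1,j}(t) = t^(q d1) - t^(q d1 - s1) e^(2 pi i j/delta), a rational function of t
  (the exponent q d1 - s1 may be negative, hence powi).\<close>
definition g1 :: "nat \<Rightarrow> nat \<Rightarrow> nat \<Rightarrow> nat \<Rightarrow> nat \<Rightarrow> complex \<Rightarrow> complex" where
  "g1 q d1 s1 \<delta> j t = t ^ (q * d1)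
     - t powi (int (q * d1) - int s1) * exp (2 * pi * \<i> * of_nat j / of_nat \<delta>)"

definition g1_hat :: "nat \<Rightarrow> nat \<Rightarrow> nat \<Rightarrow> nat \<Rightarrow> nat \<Rightarrow> complex \<Rightarrow> complex" where
  "g1_hat q d1 s1 \<delta> j t = t ^ (q * d1)
     - t powi (int (q * d1) - int s1) * exp (2 * pi * \<i> * of_nat j / (of_nat \<delta> * of_nat d1))"

definition is_root :: "(complex \<Rightarrow> complex) \<Rightarrow> complex \<Rightarrow> bool" where
  "is_root f t \<longleftrightarrow> t \<noteq> 0 \<and> f t = 0"

end

theory Submission
  imports Defs
begin

text \<open>Dividing out the common factor t^(q d1 - s1), t is a root of g_{1,j} exactly when
  t^s1 = e^(2 pi i j/delta), and of hat g_{1,j} exactly when t^s1 = e^(2 pi i j/(delta d1)).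
  The point z = e^(2 pi i r/s) satisfies z^s1 = e^(2 pi i r/delta) = e^(2 pi i j0/delta), which
  singles out j0. The candidate lambda = e^(2 pi i (r + l0 s)/(d1 s)) satisfies lambda^d1 = z and,
  because r + l0 s = delta d1 rhat + j0, also lambda^s1 = e^(2 pi i j0/(delta d1)). Two numbers
  whose d1-th and s1-th powers agree are equal since d1 and s1 are coprime, so lambda is unique.
  The Farey-pair hypotheses only serve, in the paper, to produce rhat and l0; once these are
  given the statement is pure arithmetic of roots of unity.\<close>

lemma power_minus_power_int_mult_eq_0_iff:
  fixes t c :: "'a :: field"
  assumes "t \<noteq> 0"
  shows "t ^ m - t powi (int m - int k) * c = 0 \<longleftrightarrow> t ^ k = c"
proof -
  have "t ^ m = t powi (int m - int k) * t ^ k"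
    using power_int_add[of t "int m - int k" "int k"] assms by (simp add: power_int_of_nat)
  then have "t ^ m - t powi (int m - int k) * c = t powi (int m - int k) * (t ^ k - c)"
    by (simp add: algebra_simps)
  with assms show ?thesis by simp
qed

lemma is_root_g1_iff:
  "is_root (g1 q d1 s1 \<delta> j) t \<longleftrightarrow> t \<noteq> 0 \<and> t ^ s1 = exp (2 * pi * \<i> * of_nat j / of_nat \<delta>)"
  unfolding is_root_def g1_def using power_minus_power_int_mult_eq_0_iff by blast

lemma is_root_g1_hat_iff:
  "is_root (g1_hat q d1 s1 \<delta> j) t
    \<longleftrightarrow> t \<noteq> 0 \<and> t ^ s1 = exp (2 * pi * \<i> * of_nat j / (of_nat \<delta> * of_nat d1))"
  unfolding is_root_def g1_hat_def using power_minus_power_int_mult_eq_0_iff by blast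

lemma power_coprime_eq_1:
  fixes w :: "'a :: monoid_mult"
  assumes "coprime a b" and "w ^ a = 1" and "w ^ b = 1"
  shows "w = 1"
proof (cases "a = 0")
  case True
  with assms show ?thesis by simp
next
  case False
  then obtain x y where "a * x = b * y + 1"
    using bezout_nat[of a b] \<open>coprime a b\<close> by auto
  then have "w ^ (a * x) = w ^ (b * y) * w" by (simp only: power_add power_one_right)
  with assms show ?thesis by (simp add: power_mult)
qed

lemma power_coprime_eq_imp_eq:
  fixes x y :: "'a :: field"
  assumes "coprime a b" and "y \<noteq> 0" and "x ^ a = y ^ a" and "x ^ b = y ^ b"
  shows "x = y"
proof -
  have "(x / y) ^ a = 1" and "(x / y) ^ b = 1"
    using assms by (simp_all add: power_divide)
  with power_coprime_eq_1[OF \<open>coprime a b\<close>] have "x / y = 1" by blast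
  with \<open>y \<noteq> 0\<close> show ?thesis by simp
qed

lemma exp_2pi_i_frac_power:
  assumes "k > 0"
  shows "exp (2 * pi * \<i> * of_nat a / of_nat (k * m)) ^ k = exp (2 * pi * \<i> * of_nat a / of_nat m)"
proof -
  have "of_nat k * (2 * pi * \<i> * of_nat a / of_nat (k * m)) = 2 * pi * \<i> * of_nat a / (of_nat m :: complex)"
    using assms by simp
  then show ?thesis by (metis exp_of_nat_mult)
qed

lemma is_root_g1_exp_iff:
  assumes "s = s1 * \<delta>" and "s1 > 0" and "r mod \<delta> = j0" and "j < \<delta>"
  shows "is_root (g1 q d1 s1 \<delta> j) (exp (2 * pi * \<i> * of_nat r / of_nat s)) \<longleftrightarrow> j = j0"
proof -
  have "\<delta> > 0" using \<open>j < \<delta>\<close> by simp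
  have "exp (2 * pi * \<i> * of_nat r / of_nat s) ^ s1 = exp (2 * pi * \<i> * of_nat r / of_nat \<delta>)"
    using exp_2pi_i_frac_power[OF \<open>s1 > 0\<close>] \<open>s = s1 * \<delta>\<close> by simp
  then have "is_root (g1 q d1 s1 \<delta> j) (exp (2 * pi * \<i> * of_nat r / of_nat s)) \<longleftrightarrow> r mod \<delta> = j mod \<delta>"
    using complex_root_unity_eq[of \<delta> r j] \<open>\<delta> > 0\<close> by (simp add: is_root_g1_iff)
  also have "\<dots> \<longleftrightarrow> j = j0" using assms \<open>j < \<delta>\<close> by auto
  finally show ?thesis .
qed

lemma g1_hat_root_over_exp_unique:
  assumes "coprime d1 s1" and "s = s1 * \<delta>" and "s1 > 0" and "d1 > 0" and "j0 < \<delta>"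
    and "r + l0 * s = \<delta> * d1 * rhat + j0"
  shows "is_root (g1_hat q d1 s1 \<delta> j0) lam \<and> lam ^ d1 = exp (2 * pi * \<i> * of_nat r / of_nat s)
    \<longleftrightarrow> lam = exp (2 * pi * \<i> / of_nat d1 * (of_nat r / of_nat s + of_nat l0))"
    (is "?root lam \<and> lam ^ d1 = ?z \<longleftrightarrow> lam = ?lam0")
proof -
  define N where "N = r + l0 * s"
  have "\<delta> > 0" using \<open>j0 < \<delta>\<close> by simp
  have "(of_nat N :: complex) = of_nat r + of_nat l0 * of_nat s" by (simp add: N_def)
  then have lam0_eq: "?lam0 = exp (2 * pi * \<i> * of_nat N / of_nat (d1 * s))"
    using assms \<open>\<delta> > 0\<close> by (simp add: field_simps)
  then have lam0_power_d1: "?lam0 ^ d1 = ?z"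
    using exp_2pi_i_frac_power[OF \<open>d1 > 0\<close>, of N s] complex_root_unity_eq[of s N r] assms
    by (simp add: N_def)
  have "?lam0 ^ s1 = exp (2 * pi * \<i> * of_nat N / of_nat (\<delta> * d1))"
    using exp_2pi_i_frac_power[OF \<open>s1 > 0\<close>, of N "\<delta> * d1"] lam0_eq \<open>s = s1 * \<delta>\<close>
    by (simp add: ac_simps)
  also have "\<dots> = exp (2 * pi * \<i> * of_nat j0 / of_nat (\<delta> * d1))"
  proof -
    have "j0 < \<delta> * d1" using \<open>j0 < \<delta>\<close> \<open>d1 > 0\<close> less_le_trans by fastforce
    then have "N mod (\<delta> * d1) = j0 mod (\<delta> * d1)" using assms(6) by (simp add: N_def)
    then show ?thesis using complex_root_unity_eq[of "\<delta> * d1" N j0] \<open>\<delta> > 0\<close> \<open>d1 > 0\<close> by simp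
  qed
  finally have "?root ?lam0" by (simp add: is_root_g1_hat_iff)
  moreover have "\<mu> = ?lam0" if "?root \<mu>" and "\<mu> ^ d1 = ?z" for \<mu>
  proof (rule power_coprime_eq_imp_eq[OF \<open>coprime d1 s1\<close>])
    show "\<mu> ^ s1 = ?lam0 ^ s1" using that(1) \<open>?root ?lam0\<close> by (simp add: is_root_g1_hat_iff)
  qed (use that lam0_power_d1 in auto)
  ultimately show ?thesis using lam0_power_d1 by blast
qed

theorem lemma4p5:
  fixes n p q r s d \<delta> s1 d1 r1 j0 rhat l0 :: nat
  assumes fp: "farey_pair n p q r s"
    and q2: "2 \<le> q" and qs: "q < s"
    and d_def: "d = n div q"
    and delta_def: "\<delta> = gcd d s"
    and s_eq: "s = s1 * \<delta>" and d_eq: "d = d1 * \<delta>"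
    and r_eq: "r = r1 * \<delta> + j0" and j0_lt: "j0 < \<delta>"
    and rhat_lt: "rhat < s1" and l0_lt: "l0 < d1"
    and r1_eq: "int r1 = int d1 * int rhat - int l0 * int s1"
  shows "(\<forall>j<\<delta>. is_root (g1 q d1 s1 \<delta> j) (exp (2 * pi * \<i> * of_nat r / of_nat s))
                \<longleftrightarrow> j = j0)
     \<and> (\<forall>lam. (is_root (g1_hat q d1 s1 \<delta> j0) lam \<and> lam ^ d1 = exp (2 * pi * \<i> * of_nat r / of_nat s))
             \<longleftrightarrow> lam = exp (2 * pi * \<i> / of_nat d1 * (of_nat r / of_nat s + of_nat l0)))"
proof -
  have "\<delta> > 0" and "s1 > 0" and "d1 > 0" using j0_lt rhat_lt l0_lt by auto
  have "\<delta> * gcd d1 s1 = \<delta>"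
    using delta_def s_eq d_eq by (simp add: gcd_mult_distrib_nat mult.commute)
  with \<open>\<delta> > 0\<close> have "coprime d1 s1" by (simp add: coprime_iff_gcd_eq_1)
  have "r mod \<delta> = j0" using r_eq j0_lt by simp
  have "int \<delta> * int r1 = int \<delta> * (int d1 * int rhat - int l0 * int s1)"
    using r1_eq by simp
  then have "int (r + l0 * s) = int (\<delta> * d1 * rhat + j0)"
    using r_eq s_eq by (simp add: algebra_simps)
  then have "r + l0 * s = \<delta> * d1 * rhat + j0" by (simp only: of_nat_eq_iff)
  then show ?thesis
    using is_root_g1_exp_iff[OF s_eq \<open>s1 > 0\<close> \<open>r mod \<delta> = j0\<close>]
      g1_hat_root_over_exp_unique[OF \<open>coprime d1 s1\<close> s_eq \<open>s1 > 0\<close> \<open>d1 > 0\<close> j0_lt]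
    by blast
qed

end
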